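(* Let $M$ be the $3\times 2$ array of cells (3 columns, 2 rows) whose standard figure $F\subseteq[0,3]\times[0,2]\subseteq\mathbb{R}^2$ is the union of the line segment from $(0,0)$ to $(2,2)$ (an increasing segment passing through the bottom cell of column 1 and the top cell of column 2), the segment from $(2,1)$ to $(3,0)$ (decreasing, in the bottom cell of column 3) and the segment from $(2,1)$ to $(3,2)$ (increasing, in the top cell of column 3). Then a permutation is a simple permutation avoiding both $4312$ and $3142$ if and only if it is a simple permutation lying in $\operatorname{Geom}(M)$.
   Context: A permutation $\pi$ avoids $\sigma$ if no subsequence of $\pi$ is order-isomorphic to $\sigma$. An interval of a permutation $\pi$ is a set of contiguous positions $\{a,a+1,\dots,b\}$ whose values $\{\pi(i)\}$ also form a set of contiguous integers; intervals of size $0$, $1$ and $n$ are trivial, and $\pi$ is simple if all its intervals are trivial. For a figure $F\subseteq\mathbb{R}^2$, $\operatorname{Geom}(M)$ is the set of all permutations obtained as follows: choose finitely many points of $F$, no two on a common horizontal or vertical line, label them $1,\dots,n$ from bottom to top, and read the labels from left to right. (In matrix form, with the top row displayed first, $M=\begin{pmatrix}0&1&1\\1&0&-1\end{pmatrix}$, where $1$ denotes an increasing diagonal segment across the cell, $-1$ a decreasing one, $0$ an empty cell.) *)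

theory Defs
  imports Complex_Main
begin

definition is_perm :: "nat list \<Rightarrow> bool" where
  "is_perm p \<longleftrightarrow> distinct p \<and> set p = {1..length p}"

definition contains :: "nat list \<Rightarrow> nat list \<Rightarrow> bool" where
  "contains p s \<longleftrightarrow> (\<exists>idx :: nat list. length idx = length s \<and> sorted_wrt (<) idx
      \<and> (\<forall>i\<in>set idx. i < length p)
      \<and> (\<forall>i<length s. \<forall>j<length s. (p!(idx!i) < p!(idx!j) \<longleftrightarrow> s!i < s!j)))"

definition avoids :: "nat list \<Rightarrow> nat list \<Rightarrow> bool" where
  "avoids p s \<longleftrightarrow> \<not> contains p s"

text \<open>An interval: contiguous positions {a..b} (nonempty) whose values form a set of
  contiguous integers. The empty interval is trivial anyway.\<close>
definition is_interval :: "nat list \<Rightarrow> nat \<Rightarrow> nat \<Rightarrow> bool" where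
  "is_interval p a b \<longleftrightarrow> a \<le> b \<and> b < length p \<and>
     (\<exists>c. (\<lambda>i. p!i) ` {a..b} = {c..c + (b - a)})"

definition simple_perm :: "nat list \<Rightarrow> bool" where
  "simple_perm p \<longleftrightarrow> (\<forall>a b. is_interval p a b \<longrightarrow>
       card {a..b} = 1 \<or> card {a..b} = length p)"

text \<open>Geom of a figure F: choose n points of F, no two on a common horizontal or vertical
  line, label them 1..n from bottom to top, read the labels from left to right.\<close>
definition Geom :: "(real \<times> real) set \<Rightarrow> nat list set" where
  "Geom F = {p. is_perm p \<and> (\<exists>x y :: nat \<Rightarrow> real.
       (\<forall>i<length p. (x i, y i) \<in> F)
     \<and> (\<forall>i<length p. \<forall>j<length p. i < j \<longrightarrow> x i < x j)
     \<and> (\<forall>i<length p. \<forall>j<length p. i \<noteq> j \<longrightarrow> y i \<noteq> y j)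
     \<and> (\<forall>i<length p. \<forall>j<length p. p!i < p!j \<longleftrightarrow> y i < y j))}"

text \<open>Standard figure of M = ((0,1,1),(1,0,-1)) (top row first).\<close>
definition figM :: "(real \<times> real) set" where
  "figM = {(t, t) | t. 0 \<le> t \<and> t \<le> 2}
        \<union> {(2 + t, 1 - t) | t. 0 \<le> t \<and> t \<le> 1}
        \<union> {(2 + t, 1 + t) | t. 0 \<le> t \<and> t \<le> 1}"

end

theory Submission
  imports Defs
begin

text \<open>Let the maximum n of p sit at position m. A descent before m lies in a block of
  p[0..<m] delimited by two consecutive cuts (positions splitting p[0..<m] into a lower and
  a higher part); the block is then an interval of p, because an entry after n whose value
  falls into the block's range would produce 3142 or a further cut. So p increases up to m.
  After m, an entry l with earlier entries of the suffix both below and above it spans an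
  interval from the first of those above it up to l, unless 4312 or 3142 occurs; so every
  entry of the suffix is a new maximum or a new minimum of the suffix. Permutations of this
  shape are drawn on the figure: the increasing part on the diagonal, the suffix on the two
  branches of column 3. Conversely, four points of the figure never form 4312 or 3142.\<close>

lemma contains_length4_iff:
  "contains p [s0, s1, s2, s3] \<longleftrightarrow>
     (\<exists>a b c d. a < b \<and> b < c \<and> c < d \<and> d < length p \<and>
        (\<forall>i<4. \<forall>j<4. [p!a, p!b, p!c, p!d]!i < [p!a, p!b, p!c, p!d]!j
                      \<longleftrightarrow> [s0, s1, s2, s3]!i < [s0, s1, s2, s3]!j))"
    (is "_ \<longleftrightarrow> (\<exists>a b c d. ?occ a b c d)")
proof
  assume "contains p [s0, s1, s2, s3]"
  then obtain idx where len: "length idx = length [s0, s1, s2, s3]"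
    and idx: "sorted_wrt (<) idx" "\<forall>i\<in>set idx. i < length p"
      "\<forall>i<length [s0, s1, s2, s3]. \<forall>j<length [s0, s1, s2, s3].
         p!(idx!i) < p!(idx!j) \<longleftrightarrow> [s0, s1, s2, s3]!i < [s0, s1, s2, s3]!j"
    unfolding contains_def by blast
  from len obtain a b c d where "idx = [a, b, c, d]"
    by (auto simp: length_Suc_conv)
  with idx have "?occ a b c d"
    by (auto simp: less_Suc_eq numeral_eq_Suc)
  then show "\<exists>a b c d. ?occ a b c d" by blast
next
  assume "\<exists>a b c d. ?occ a b c d"
  then obtain a b c d where "?occ a b c d" by blast
  then show "contains p [s0, s1, s2, s3]"
    unfolding contains_def
    by (intro exI[of _ "[a, b, c, d]"]) (auto simp: less_Suc_eq numeral_eq_Suc)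
qed

lemma contains_4312_iff:
  "contains p [4,3,1,2] \<longleftrightarrow>
     (\<exists>a b c d. a < b \<and> b < c \<and> c < d \<and> d < length p \<and> p!c < p!d \<and> p!d < p!b \<and> p!b < p!a)"
    (is "_ \<longleftrightarrow> (\<exists>a b c d. ?occ a b c d)")
proof
  assume "contains p [4,3,1,2]"
  then show "\<exists>a b c d. ?occ a b c d"
    unfolding contains_length4_iff by (simp add: less_Suc_eq numeral_eq_Suc all_conj_distrib) blast
next
  assume "\<exists>a b c d. ?occ a b c d"
  then obtain a b c d where "?occ a b c d" by blast
  then show "contains p [4,3,1,2]"
    unfolding contains_length4_iff
    by (intro exI[of _ a] exI[of _ b] exI[of _ c] exI[of _ d]) (auto simp: less_Suc_eq numeral_eq_Suc)
qed

lemma contains_3142_iff: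
  "contains p [3,1,4,2] \<longleftrightarrow>
     (\<exists>a b c d. a < b \<and> b < c \<and> c < d \<and> d < length p \<and> p!b < p!d \<and> p!d < p!a \<and> p!a < p!c)"
    (is "_ \<longleftrightarrow> (\<exists>a b c d. ?occ a b c d)")
proof
  assume "contains p [3,1,4,2]"
  then show "\<exists>a b c d. ?occ a b c d"
    unfolding contains_length4_iff by (simp add: less_Suc_eq numeral_eq_Suc all_conj_distrib) blast
next
  assume "\<exists>a b c d. ?occ a b c d"
  then obtain a b c d where "?occ a b c d" by blast
  then show "contains p [3,1,4,2]"
    unfolding contains_length4_iff
    by (intro exI[of _ a] exI[of _ b] exI[of _ c] exI[of _ d]) (auto simp: less_Suc_eq numeral_eq_Suc)
qed

lemma is_perm_nth_bounds: "is_perm p \<Longrightarrow> i < length p \<Longrightarrow> 1 \<le> p!i \<and> p!i \<le> length p"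
  unfolding is_perm_def by (metis atLeastAtMost_iff nth_mem)

lemma is_perm_nth_eq_iff: "is_perm p \<Longrightarrow> i < length p \<Longrightarrow> j < length p \<Longrightarrow> p!i = p!j \<longleftrightarrow> i = j"
  unfolding is_perm_def by (simp add: nth_eq_iff_index_eq)

lemma is_perm_value_attained: "is_perm p \<Longrightarrow> 1 \<le> v \<Longrightarrow> v \<le> length p \<Longrightarrow> \<exists>i<length p. p!i = v"
  unfolding is_perm_def by (metis atLeastAtMost_iff in_set_conv_nth)

lemma ex_max_on_atLeastLessThan:
  fixes f :: "nat \<Rightarrow> 'a::linorder"
  assumes "a < b"
  obtains q where "a \<le> q" "q < b" "\<And>k. a \<le> k \<Longrightarrow> k < b \<Longrightarrow> f k \<le> f q"
proof -
  have "Max (f ` {a..<b}) \<in> f ` {a..<b}" using assms by (intro Max_in) auto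
  then obtain q where q: "a \<le> q" "q < b" "f q = Max (f ` {a..<b})" by auto
  show thesis by (rule that[OF q(1,2)]) (auto simp: q(3) intro!: Max_ge)
qed

lemma ex_min_on_atLeastLessThan:
  fixes f :: "nat \<Rightarrow> 'a::linorder"
  assumes "a < b"
  obtains q where "a \<le> q" "q < b" "\<And>k. a \<le> k \<Longrightarrow> k < b \<Longrightarrow> f q \<le> f k"
proof -
  have "Min (f ` {a..<b}) \<in> f ` {a..<b}" using assms by (intro Min_in) auto
  then obtain q where q: "a \<le> q" "q < b" "f q = Min (f ` {a..<b})" by auto
  show thesis by (rule that[OF q(1,2)]) (auto simp: q(3) intro!: Min_le)
qed

lemma nat_maximal_gap:
  fixes P :: "nat \<Rightarrow> bool" and a b n :: nat
  assumes "P a" "P b" "a < n" "n < b" "\<not> P n"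
  obtains lo hi where "lo < n" "n < hi" "hi \<le> b" "P lo" "P hi"
    "\<And>c. lo < c \<Longrightarrow> c < hi \<Longrightarrow> \<not> P c"
proof -
  obtain lo where lo: "lo < n \<and> P lo" and lo_max: "\<And>c. c < n \<and> P c \<Longrightarrow> c \<le> lo"
    using Nat.ex_has_greatest_nat[where P="\<lambda>k. k < n \<and> P k" and k=a and b=n] assms by auto
  obtain hi where hi: "n < hi \<and> P hi" and hi_min: "\<And>c. c < hi \<Longrightarrow> \<not> (n < c \<and> P c)"
    using exists_least_iff[of "\<lambda>k. n < k \<and> P k"] assms by auto
  have "hi \<le> b" using hi_min[of b] assms by linarith
  moreover have "\<not> P c" if "lo < c" "c < hi" for c
    using lo_max[of c] hi_min[of c] that assms(5) by (cases c n rule: linorder_cases) auto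
  ultimately show thesis using that lo hi by blast
qed

lemma is_intervalI:
  assumes perm: "is_perm p" and ab: "a \<le> b" "b < length p"
    and window: "\<And>k. k < length p \<Longrightarrow> a \<le> k \<and> k \<le> b \<longleftrightarrow> lo \<le> p!k \<and> p!k \<le> hi"
  shows "is_interval p a b"
proof -
  let ?f = "\<lambda>i. p!i" and ?c = "max 1 lo"
  have img: "?f ` {a..b} = {?c..min (length p) hi}"
  proof
    show "?f ` {a..b} \<subseteq> {?c..min (length p) hi}"
    proof
      fix v assume "v \<in> ?f ` {a..b}"
      then obtain k where "a \<le> k" "k \<le> b" "v = p!k" by auto
      with ab window[of k] is_perm_nth_bounds[OF perm, of k] show "v \<in> {?c..min (length p) hi}"
        by auto
    qed
    show "{?c..min (length p) hi} \<subseteq> ?f ` {a..b}"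
    proof
      fix v assume "v \<in> {?c..min (length p) hi}"
      with is_perm_value_attained[OF perm] obtain k where "k < length p" "p!k = v" by auto
      with window \<open>v \<in> _\<close> show "v \<in> ?f ` {a..b}" by force
    qed
  qed
  have "inj_on ?f {a..b}" using is_perm_nth_eq_iff[OF perm] ab by (auto simp: inj_on_def)
  then have "card (?f ` {a..b}) = b + 1 - a" by (simp add: card_image)
  with img ab have "?f ` {a..b} = {?c..?c + (b - a)}" by auto
  with ab show ?thesis unfolding is_interval_def by blast
qed

lemma simple_perm_no_proper_interval:
  assumes "simple_perm p" "is_interval p a b" "a < b" "b + 1 - a < length p"
  shows False
  using assms unfolding simple_perm_def by fastforce

locale simple_avoider =
  fixes p :: "nat list" and m :: nat
  assumes perm: "is_perm p" and simple: "simple_perm p"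
    and avoids_4312: "avoids p [4,3,1,2]" and avoids_3142: "avoids p [3,1,4,2]"
    and max_pos: "m < length p" and max_val: "p!m = length p"
begin

lemma no_4312: "a < b \<Longrightarrow> b < c \<Longrightarrow> c < d \<Longrightarrow> d < length p \<Longrightarrow>
    p!c < p!d \<Longrightarrow> p!d < p!b \<Longrightarrow> p!b < p!a \<Longrightarrow> False"
  using avoids_4312 contains_4312_iff unfolding avoids_def by blast

lemma no_3142: "a < b \<Longrightarrow> b < c \<Longrightarrow> c < d \<Longrightarrow> d < length p \<Longrightarrow>
    p!b < p!d \<Longrightarrow> p!d < p!a \<Longrightarrow> p!a < p!c \<Longrightarrow> False"
  using avoids_3142 contains_3142_iff unfolding avoids_def by blast

lemma nth_eq_iff: "i < length p \<Longrightarrow> j < length p \<Longrightarrow> p!i = p!j \<longleftrightarrow> i = j"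
  using is_perm_nth_eq_iff[OF perm] .

lemma nth_less_max: "i < length p \<Longrightarrow> i \<noteq> m \<Longrightarrow> p!i < p!m"
  using is_perm_nth_bounds[OF perm] nth_eq_iff max_pos max_val by (metis le_neq_implies_less)

lemma prefix_inversion_no_straddle:
  "i < j \<Longrightarrow> j < m \<Longrightarrow> m < k \<Longrightarrow> k < length p \<Longrightarrow> p!j < p!k \<Longrightarrow> p!k < p!i \<Longrightarrow> False"
  using no_3142[of i j m k] nth_less_max[of i] max_pos by linarith

definition prefix_cut :: "nat \<Rightarrow> bool" where
  "prefix_cut k \<longleftrightarrow> k \<le> m \<and> (\<forall>x<k. \<forall>y. k \<le> y \<and> y < m \<longrightarrow> p!x < p!y)"

lemma prefix_cut_0: "prefix_cut 0"
  and prefix_cut_m: "prefix_cut m"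
  unfolding prefix_cut_def by auto

lemma prefix_cut_between:
  assumes cuts: "prefix_cut s" "prefix_cut e"
    and k: "m < k" "k < length p"
    and lo: "s \<le> lo" "lo < e" "p!lo < p!k" and hi: "s \<le> hi" "hi < e" "p!k < p!hi"
  shows "\<exists>c. s < c \<and> c < e \<and> prefix_cut c"
proof -
  have "e \<le> m" using cuts(2) unfolding prefix_cut_def by simp
  obtain c where c: "s \<le> c" "c < e" "p!k < p!c"
    and c_least: "\<And>x. x < c \<Longrightarrow> \<not> (s \<le> x \<and> x < e \<and> p!k < p!x)"
    using exists_least_iff[of "\<lambda>c. s \<le> c \<and> c < e \<and> p!k < p!c"] hi by blast
  have before_c: "p!x < p!k" if "s \<le> x" "x < c" for x
    using c_least[of x] nth_eq_iff[of x k] that c k \<open>e \<le> m\<close> by (auto simp: not_less le_less)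
  have after_c: "p!k < p!y" if "c \<le> y" "y < e" for y
  proof (rule ccontr)
    assume "\<not> p!k < p!y"
    with nth_eq_iff[of y k] that k \<open>e \<le> m\<close> have "p!y < p!k" by (auto simp: le_less)
    with c that have "c < y" by (cases "c = y") auto
    with \<open>p!y < p!k\<close> c that k \<open>e \<le> m\<close> show False
      using prefix_inversion_no_straddle[of c y k] by linarith
  qed
  have "s < c"
  proof (rule ccontr)
    assume "\<not> s < c"
    with c have "c = s" by simp
    with lo c have "s < lo" by (cases "lo = s") auto
    moreover have "p!k < p!s" using c \<open>c = s\<close> by simp
    ultimately show False
      using prefix_inversion_no_straddle[of s lo k] lo k \<open>e \<le> m\<close> by linarith
  qed
  moreover have "prefix_cut c"
    unfolding prefix_cut_def
  proof (intro conjI allI impI)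
    show "c \<le> m" using c \<open>e \<le> m\<close> by simp
    fix x y assume xy: "x < c" "c \<le> y \<and> y < m"
    consider "x < s" | "s \<le> x" "y < e" | "s \<le> x" "e \<le> y" by linarith
    then show "p!x < p!y"
    proof cases
      case 1 then show ?thesis using cuts(1) xy c unfolding prefix_cut_def by auto
    next
      case 2 then show ?thesis using before_c[of x] after_c[of y] xy by auto
    next
      case 3 then show ?thesis using cuts(2) xy c unfolding prefix_cut_def by auto
    qed
  qed
  ultimately show ?thesis using c by blast
qed

lemma prefix_block_interval:
  assumes cuts: "prefix_cut s" "prefix_cut e" and "s < e"
    and gap: "\<And>c. s < c \<Longrightarrow> c < e \<Longrightarrow> \<not> prefix_cut c"
  shows "is_interval p s (e - 1)"
proof -
  have "e \<le> m" using cuts(2) unfolding prefix_cut_def by simp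
  obtain lo where lo: "s \<le> lo" "lo < e" and lo_min: "\<And>k. s \<le> k \<Longrightarrow> k < e \<Longrightarrow> p!lo \<le> p!k"
    using ex_min_on_atLeastLessThan[OF \<open>s < e\<close>, of "\<lambda>k. p!k"] by blast
  obtain hi where hi: "s \<le> hi" "hi < e" and hi_max: "\<And>k. s \<le> k \<Longrightarrow> k < e \<Longrightarrow> p!k \<le> p!hi"
    using ex_max_on_atLeastLessThan[OF \<open>s < e\<close>, of "\<lambda>k. p!k"] by blast
  show ?thesis
  proof (rule is_intervalI[OF perm, where lo = "p!lo" and hi = "p!hi"])
    fix k assume k: "k < length p"
    show "s \<le> k \<and> k \<le> e - 1 \<longleftrightarrow> p!lo \<le> p!k \<and> p!k \<le> p!hi"
    proof
      assume "s \<le> k \<and> k \<le> e - 1"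
      then show "p!lo \<le> p!k \<and> p!k \<le> p!hi" using lo_min hi_max \<open>s < e\<close> by auto
    next
      assume range: "p!lo \<le> p!k \<and> p!k \<le> p!hi"
      show "s \<le> k \<and> k \<le> e - 1"
      proof (rule ccontr)
        assume outside: "\<not> (s \<le> k \<and> k \<le> e - 1)"
        consider "k < s" | "e \<le> k" "k < m" | "k = m" | "m < k" using outside \<open>s < e\<close> by linarith
        then show False
        proof cases
          case 1
          then have "p!k < p!lo" using cuts(1) lo \<open>e \<le> m\<close> unfolding prefix_cut_def by auto
          then show False using range by simp
        next
          case 2
          then have "p!hi < p!k" using cuts(2) hi unfolding prefix_cut_def by auto
          then show False using range by simp
        next
          case 3 then show False using nth_less_max[of hi] hi range \<open>e \<le> m\<close> max_pos by auto
        next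
          case 4
          with range nth_eq_iff[of k lo] nth_eq_iff[of k hi] k lo hi \<open>e \<le> m\<close>
          have "p!lo < p!k" "p!k < p!hi" by (auto simp: le_less)
          with prefix_cut_between[OF cuts 4 k] lo hi gap show False by blast
        qed
      qed
    qed
  qed (use \<open>s < e\<close> \<open>e \<le> m\<close> max_pos in auto)
qed

lemma prefix_ascent:
  assumes "Suc t < m"
  shows "p!t < p!(Suc t)"
proof (rule ccontr)
  assume "\<not> p!t < p!(Suc t)"
  then have "\<not> prefix_cut (Suc t)" using assms unfolding prefix_cut_def by auto
  then obtain s e where "s < Suc t" "Suc t < e" "e \<le> m" "prefix_cut s" "prefix_cut e"
    and gap: "\<And>c. s < c \<Longrightarrow> c < e \<Longrightarrow> \<not> prefix_cut c"
    using nat_maximal_gap[of prefix_cut 0 m "Suc t"] prefix_cut_0 prefix_cut_m assms by blast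
  then have "is_interval p s (e - 1)" by (intro prefix_block_interval) auto
  moreover have "s < e - 1" "e - 1 + 1 - s < length p"
    using \<open>s < Suc t\<close> \<open>Suc t < e\<close> \<open>e \<le> m\<close> max_pos by linarith+
  ultimately show False using simple_perm_no_proper_interval[OF simple] by blast
qed

lemma prefix_ascending:
  assumes "i < j" "j \<le> m"
  shows "p!i < p!j"
proof (cases "j = m")
  case True
  then show ?thesis using nth_less_max[of i] assms max_pos by simp
next
  case False
  with assms have "j < m" by simp
  from this \<open>i < j\<close> show ?thesis
  proof (induction j)
    case (Suc j)
    then show ?case
      using prefix_ascent[of j] by (cases "i = j") auto
  qed simp
qed

lemma suffix_no_straddle:
  assumes i: "m < i" "i < l" "p!i < p!l" and j: "m < j" "j < l" "p!l < p!j" and l: "l < length p"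
  shows False
proof -
  obtain j0 where j0: "m < j0" "j0 < l" "p!l < p!j0"
    and j0_least: "\<And>k. k < j0 \<Longrightarrow> \<not> (m < k \<and> k < l \<and> p!l < p!k)"
    using exists_least_iff[of "\<lambda>k. m < k \<and> k < l \<and> p!l < p!k"] j by blast
  have below: "p!k < p!l" if "m < k" "k < j0" for k
    using j0_least[of k] nth_eq_iff[of k l] that j0 l by (auto simp: not_less le_less)
  have above: "p!l < p!k" if "j0 \<le> k" "k < l" for k
  proof (rule ccontr)
    assume "\<not> p!l < p!k"
    with nth_eq_iff[of k l] that l have "p!k < p!l" by (auto simp: not_less le_less)
    moreover from this j0 have "j0 < k" using that by (cases "j0 = k") auto
    ultimately show False
      using no_4312[of m j0 k l] nth_less_max[of j0] j0 that l by linarith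
  qed
  have "i < j0" using above[of i] i by (meson not_less order.asym)
  obtain q where q: "j0 \<le> q" "q < l" and q_max: "\<And>k. j0 \<le> k \<Longrightarrow> k < l \<Longrightarrow> p!k \<le> p!q"
    using ex_max_on_atLeastLessThan[OF \<open>j0 < l\<close>, of "\<lambda>k. p!k"] by blast
  have "is_interval p j0 l"
  proof (rule is_intervalI[OF perm, where lo = "p!l" and hi = "p!q"])
    fix k assume k: "k < length p"
    show "j0 \<le> k \<and> k \<le> l \<longleftrightarrow> p!l \<le> p!k \<and> p!k \<le> p!q"
    proof
      assume "j0 \<le> k \<and> k \<le> l"
      then show "p!l \<le> p!k \<and> p!k \<le> p!q"
        using above[of k] q_max[of k] q_max[of j0] j0 by (cases "k = l") auto
    next
      assume range: "p!l \<le> p!k \<and> p!k \<le> p!q"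
      show "j0 \<le> k \<and> k \<le> l"
      proof (rule ccontr)
        assume outside: "\<not> (j0 \<le> k \<and> k \<le> l)"
        then have "k \<noteq> l" "k \<noteq> q" using q by auto
        with range nth_eq_iff[of k l] nth_eq_iff[of k q] k l q
        have strict: "p!l < p!k" "p!k < p!q" by (auto simp: le_less)
        consider "k < m" | "k = m" | "m < k \<and> k < j0" | "l < k" using outside by linarith
        then show False
        proof cases
          case 1 then show False using no_3142[of k i q l] strict i q \<open>i < j0\<close> l by linarith
        next
          case 2 then show False using nth_less_max[of q] strict q l by auto
        next
          case 3 then show False using below[of k] strict by auto
        next
          case 4 then show False using no_4312[of m q l k] nth_less_max[of q] strict q j0 k by linarith
        qed
      qed
    qed
  qed (use j0 l in auto)
  then show False
    using simple_perm_no_proper_interval[OF simple, of j0 l] j0 l by linarith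
qed

lemma suffix_records:
  assumes "m < l" "l < length p"
  shows "(\<forall>i. m < i \<and> i < l \<longrightarrow> p!i < p!l) \<or> (\<forall>i. m < i \<and> i < l \<longrightarrow> p!l < p!i)"
proof (rule ccontr)
  assume "\<not> ?thesis"
  then obtain i j where "m < i" "i < l" "p!i \<le> p!l" "m < j" "j < l" "p!l \<le> p!j"
    by (auto simp: not_less)
  with nth_eq_iff[of i l] nth_eq_iff[of j l] assms have "p!i < p!l" "p!l < p!j"
    by (auto simp: le_less)
  with suffix_no_straddle \<open>m < i\<close> \<open>i < l\<close> \<open>m < j\<close> \<open>j < l\<close> assms(2) show False by blast
qed

end

lemma figM_iff:
  "(u, v) \<in> figM \<longleftrightarrow>
     (v = u \<and> 0 \<le> u \<and> u \<le> 2) \<or> (v = 3 - u \<and> 2 \<le> u \<and> u \<le> 3) \<or> (v = u - 1 \<and> 2 \<le> u \<and> u \<le> 3)"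
  (is "_ \<longleftrightarrow> ?segments")
proof
  assume "(u, v) \<in> figM" then show ?segments unfolding figM_def by auto
next
  assume ?segments
  then consider (diagonal) "v = u" "0 \<le> u" "u \<le> 2"
    | (down) "v = 1 - (u - 2)" "0 \<le> u - 2" "u - 2 \<le> 1"
    | (up) "v = 1 + (u - 2)" "0 \<le> u - 2" "u - 2 \<le> 1"
    by force
  then show "(u, v) \<in> figM"
  proof cases
    case diagonal then show ?thesis unfolding figM_def by blast
  next
    case down
    then have "(u, v) = (2 + (u - 2), 1 - (u - 2))" by simp
    with down show ?thesis unfolding figM_def by blast
  next
    case up
    then have "(u, v) = (2 + (u - 2), 1 + (u - 2))" by simp
    with up show ?thesis unfolding figM_def by blast
  qed
qed

lemma figM_no_4312:
  assumes "(xa, ya) \<in> figM" "(xb, yb) \<in> figM" "(xc, yc) \<in> figM" "(xd, yd) \<in> figM"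
    and "xa < xb" "xb < xc" "xc < xd" "yc < yd" "yd < yb" "yb < ya"
  shows False
  using assms unfolding figM_iff by (elim disjE conjE) linarith+

lemma figM_no_3142:
  assumes "(xa, ya) \<in> figM" "(xb, yb) \<in> figM" "(xc, yc) \<in> figM" "(xd, yd) \<in> figM"
    and "xa < xb" "xb < xc" "xc < xd" "yb < yd" "yd < ya" "ya < yc"
  shows False
  using assms unfolding figM_iff by (elim disjE conjE) linarith+

lemma Geom_figM_avoids:
  assumes "p \<in> Geom figM"
  shows "avoids p [4,3,1,2]" and "avoids p [3,1,4,2]"
proof -
  from assms obtain x y :: "nat \<Rightarrow> real" where
    pts: "\<forall>i<length p. (x i, y i) \<in> figM" and
    xs: "\<forall>i<length p. \<forall>j<length p. i < j \<longrightarrow> x i < x j" and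
    ys: "\<forall>i<length p. \<forall>j<length p. p!i < p!j \<longleftrightarrow> y i < y j"
    unfolding Geom_def by blast
  show "avoids p [4,3,1,2]"
    unfolding avoids_def contains_4312_iff
  proof (rule notI, elim exE conjE)
    fix a b c d assume "a < b" "b < c" "c < d" "d < length p" "p!c < p!d" "p!d < p!b" "p!b < p!a"
    with pts xs ys show False
      by (intro figM_no_4312[of "x a" "y a" "x b" "y b" "x c" "y c" "x d" "y d"]) auto
  qed
  show "avoids p [3,1,4,2]"
    unfolding avoids_def contains_3142_iff
  proof (rule notI, elim exE conjE)
    fix a b c d assume "a < b" "b < c" "c < d" "d < length p" "p!b < p!d" "p!d < p!a" "p!a < p!c"
    with pts xs ys show False
      by (intro figM_no_3142[of "x a" "y a" "x b" "y b" "x c" "y c" "x d" "y d"]) auto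
  qed
qed

locale ascent_then_records =
  fixes p :: "nat list" and m :: nat
  assumes perm: "is_perm p" and split_pos: "m < length p"
    and prefix_ascending: "\<And>i j. i < j \<Longrightarrow> j \<le> m \<Longrightarrow> p!i < p!j"
    and suffix_records: "\<And>l. m < l \<Longrightarrow> l < length p \<Longrightarrow>
      (\<forall>i. m < i \<and> i < l \<longrightarrow> p!i < p!l) \<or> (\<forall>i. m < i \<and> i < l \<longrightarrow> p!l < p!i)"
begin

lemma upper_branch_record:
  assumes "m < i" "i < l" "l < length p" "p!(Suc m) < p!l"
  shows "p!i < p!l"
proof -
  have "Suc m < l" using assms by simp
  with suffix_records[of l] assms show ?thesis by force
qed

lemma lower_branch_record:
  assumes "m < i" "i < l" "l < length p" "p!l \<le> p!(Suc m)"
  shows "p!l < p!i"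
proof -
  have "Suc m < l" using assms by simp
  with suffix_records[of l] assms show ?thesis by force
qed

text \<open>The suffix entry j is drawn at horizontal offset (j - m)/scale in column 3, on the
  upper branch if it exceeds p!(Suc m) and on the lower branch otherwise; its height over 1
  is tail_level j / scale, and tail_level is integral and increasing in the value of the
  entry. An entry i of the increasing part is put on the diagonal at a height between the
  levels of the suffix entries below and above it, the fractional part p!i/scale ordering
  such entries among themselves.\<close>

definition scale :: real where
  "scale = real (length p) + 1"

definition tail_level :: "nat \<Rightarrow> int" where
  "tail_level j = (if p!j \<le> p!(Suc m) then int m - int j else int j - int m)"

definition levels_below :: "nat \<Rightarrow> int set" where
  "levels_below i = insert (- int (length p) - 1) (tail_level ` {j. m < j \<and> j < length p \<and> p!j \<le> p!i})"

definition floor_level :: "nat \<Rightarrow> int" where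
  "floor_level i = Max (levels_below i)"

definition level :: "nat \<Rightarrow> real" where
  "level i = of_int (floor_level i) + (if i \<le> m then real (p!i) / scale else 0)"

definition height :: "nat \<Rightarrow> real" where
  "height i = 1 + level i / scale"

definition abscissa :: "nat \<Rightarrow> real" where
  "abscissa i = (if i \<le> m then height i else 2 + (real i - real m) / scale)"

lemma scale_pos: "0 < scale"
  unfolding scale_def by simp

lemma tail_level_strict_mono:
  assumes k: "m < k" "k < length p" and j: "m < j" "j < length p" and "p!k < p!j"
  shows "tail_level k < tail_level j"
proof (cases "p!j \<le> p!(Suc m)")
  case True
  have "j < k"
  proof (rule ccontr)
    assume "\<not> j < k"
    with \<open>p!k < p!j\<close> have "k < j" by (cases "k = j") auto
    with lower_branch_record[of k j] k j True \<open>p!k < p!j\<close> show False by simp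
  qed
  with True \<open>p!k < p!j\<close> show ?thesis unfolding tail_level_def by simp
next
  case False
  show ?thesis
  proof (cases "p!k \<le> p!(Suc m)")
    case True
    with False k j show ?thesis unfolding tail_level_def by simp
  next
    case k_up: False
    have "k < j"
    proof (rule ccontr)
      assume "\<not> k < j"
      with \<open>p!k < p!j\<close> have "j < k" by (cases "k = j") auto
      with upper_branch_record[of j k] k j k_up \<open>p!k < p!j\<close> show False by simp
    qed
    with False k_up show ?thesis unfolding tail_level_def by simp
  qed
qed

lemma tail_level_bounds:
  "m < j \<Longrightarrow> j < length p \<Longrightarrow> 1 - int (length p) \<le> tail_level j \<and> tail_level j \<le> int (length p) - 1"
  unfolding tail_level_def by auto

lemma finite_levels_below: "finite (levels_below i)"
  unfolding levels_below_def by simp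

lemma floor_level_bounds: "- int (length p) - 1 \<le> floor_level i \<and> floor_level i \<le> int (length p) - 1"
  using tail_level_bounds unfolding floor_level_def
  by (auto simp: Max_ge_iff finite_levels_below) (auto simp: levels_below_def)

lemma floor_level_suffix:
  assumes "m < i" "i < length p"
  shows "floor_level i = tail_level i"
  unfolding floor_level_def
proof (rule Max_eqI[OF finite_levels_below])
  show "tail_level i \<in> levels_below i" using assms unfolding levels_below_def by auto
  fix y assume "y \<in> levels_below i"
  then consider "y = - int (length p) - 1"
    | j where "m < j" "j < length p" "p!j \<le> p!i" "y = tail_level j"
    unfolding levels_below_def by auto
  then show "y \<le> tail_level i"
  proof cases
    case 1
    then show ?thesis using tail_level_bounds[OF assms] by linarith
  next
    case (2 j)
    then show ?thesis
      using tail_level_strict_mono[of j i] is_perm_nth_eq_iff[OF perm, of j i] assms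
      by (cases "p!j = p!i") auto
  qed
qed

lemma floor_level_mono: "p!i \<le> p!j \<Longrightarrow> floor_level i \<le> floor_level j"
  unfolding floor_level_def by (rule Max_mono[OF _ _ finite_levels_below]) (auto simp: levels_below_def)

lemma floor_level_less_tail:
  assumes "m < j" "j < length p" "p!i < p!j"
  shows "floor_level i < tail_level j"
proof -
  have "tail_level k < tail_level j" if "m < k" "k < length p" "p!k \<le> p!i" for k
    using tail_level_strict_mono[of k j] that assms by simp
  moreover have "- int (length p) - 1 < tail_level j" using tail_level_bounds[OF assms(1,2)] by linarith
  ultimately show ?thesis
    unfolding floor_level_def by (subst Max_less_iff[OF finite_levels_below]) (auto simp: levels_below_def)
qed

lemma level_strict_mono:
  assumes i: "i < length p" and j: "j < length p" and ij: "p!i < p!j"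
  shows "level i < level j"
proof -
  define frac where "frac k = (if k \<le> m then real (p!k) / scale else 0)" for k
  have level_eq: "level k = of_int (floor_level k) + frac k" for k
    unfolding level_def frac_def ..
  have "real (p!i) < scale" using is_perm_nth_bounds[OF perm i] unfolding scale_def by simp
  then have frac_i: "frac i < 1" using scale_pos unfolding frac_def by simp
  show ?thesis
  proof (cases "j \<le> m")
    case True
    have "1 \<le> p!j" using is_perm_nth_bounds[OF perm j] by simp
    then have "frac i < frac j"
      using True ij scale_pos unfolding frac_def by (simp add: divide_strict_right_mono)
    with floor_level_mono[of i j] ij show ?thesis unfolding level_eq by simp
  next
    case False
    then have "floor_level i < floor_level j"
      using floor_level_less_tail[of j i] floor_level_suffix[of j] j ij by simp
    then have "of_int (floor_level i) + 1 \<le> (of_int (floor_level j) :: real)" by linarith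
    with frac_i False show ?thesis unfolding level_eq frac_def by simp
  qed
qed

lemma height_strict_mono: "i < length p \<Longrightarrow> j < length p \<Longrightarrow> p!i < p!j \<Longrightarrow> height i < height j"
  using level_strict_mono scale_pos unfolding height_def by (simp add: divide_strict_right_mono)

lemma height_less_iff:
  assumes "i < length p" "j < length p"
  shows "height i < height j \<longleftrightarrow> p!i < p!j"
  using height_strict_mono[OF assms] height_strict_mono[OF assms(2,1)] is_perm_nth_eq_iff[OF perm assms]
  by (cases "p!i" "p!j" rule: linorder_cases) auto

lemma prefix_height_bounds:
  assumes "i \<le> m"
  shows "0 \<le> height i \<and> height i \<le> 2"
proof -
  have "p!i \<le> length p" using is_perm_nth_bounds[OF perm] assms split_pos by simp
  then have "0 \<le> real (p!i) / scale" "real (p!i) / scale \<le> 1"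
    using scale_pos unfolding scale_def by simp_all
  moreover have "level i = of_int (floor_level i) + real (p!i) / scale"
    using assms unfolding level_def by simp
  ultimately have "- scale \<le> level i" "level i \<le> scale"
    using floor_level_bounds[of i] unfolding scale_def by linarith+
  then show ?thesis using scale_pos unfolding height_def by (simp add: field_simps)
qed

lemma point_in_figM:
  assumes "i < length p"
  shows "(abscissa i, height i) \<in> figM"
proof (cases "i \<le> m")
  case True
  then show ?thesis using prefix_height_bounds[OF True] unfolding abscissa_def figM_iff by simp
next
  case False
  define t where "t = (real i - real m) / scale"
  have "0 \<le> t" "t \<le> 1" using False assms scale_pos unfolding t_def scale_def by simp_all
  moreover have "height i = 1 + of_int (tail_level i) / scale"
    using floor_level_suffix[of i] False assms unfolding height_def level_def by simp
  then have "height i = 1 - t \<or> height i = 1 + t"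
    unfolding t_def tail_level_def using False by (auto simp: diff_divide_distrib)
  moreover have "abscissa i = 2 + t" unfolding abscissa_def t_def using False by simp
  ultimately show ?thesis unfolding figM_iff by auto
qed

lemma abscissa_strict_mono:
  assumes "i < j" "j < length p"
  shows "abscissa i < abscissa j"
proof (cases "j \<le> m")
  case True
  then show ?thesis
    using height_less_iff[of i j] prefix_ascending[OF assms(1) True] assms
    unfolding abscissa_def by simp
next
  case False
  then have "0 < (real j - real m) / scale" using scale_pos by simp
  moreover have "(real i - real m) / scale < (real j - real m) / scale"
    using assms scale_pos by (simp add: divide_strict_right_mono)
  ultimately show ?thesis
    using prefix_height_bounds[of i] False unfolding abscissa_def by auto
qed

theorem in_Geom_figM: "p \<in> Geom figM"
proof -
  have "\<forall>i<length p. \<forall>j<length p. i \<noteq> j \<longrightarrow> height i \<noteq> height j"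
  proof (intro allI impI)
    fix i j assume "i < length p" "j < length p" "i \<noteq> j"
    then show "height i \<noteq> height j"
      using height_less_iff[of i j] height_less_iff[of j i] is_perm_nth_eq_iff[OF perm, of i j]
      by (cases "p!i" "p!j" rule: linorder_cases) auto
  qed
  moreover have "\<forall>i<length p. \<forall>j<length p. i < j \<longrightarrow> abscissa i < abscissa j"
    using abscissa_strict_mono by blast
  ultimately show ?thesis
    unfolding Geom_def using perm point_in_figM height_less_iff by blast
qed

end

sublocale simple_avoider \<subseteq> ascent_then_records
  using perm max_pos prefix_ascending suffix_records by unfold_locales auto

theorem proposition4p1:
  fixes p :: "nat list"
  assumes "is_perm p"
  shows "(simple_perm p \<and> avoids p [4,3,1,2] \<and> avoids p [3,1,4,2])
         \<longleftrightarrow> (simple_perm p \<and> p \<in> Geom figM)"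
proof
  assume "simple_perm p \<and> p \<in> Geom figM"
  then show "simple_perm p \<and> avoids p [4,3,1,2] \<and> avoids p [3,1,4,2]"
    using Geom_figM_avoids by blast
next
  assume avoider: "simple_perm p \<and> avoids p [4,3,1,2] \<and> avoids p [3,1,4,2]"
  have "p \<in> Geom figM"
  proof (cases "p = []")
    case True
    then show ?thesis using assms unfolding Geom_def by simp
  next
    case False
    then have "length p \<in> set p" using assms unfolding is_perm_def by (simp add: Suc_le_eq)
    then obtain m where "m < length p" "p!m = length p" by (auto simp: in_set_conv_nth)
    with assms avoider interpret simple_avoider p m by unfold_locales auto
    show ?thesis by (rule in_Geom_figM)
  qed
  with avoider show "simple_perm p \<and> p \<in> Geom figM" by blast
qed

end
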